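(* Let $\arctan$ be the principal branch of the inverse tangent with $\arctan0=0$. For $|z-1|<1$, \[ \frac{\arctan z-\frac{\pi}{4}}{z}=\sum_{n=1}^{\infty}(-1)^nT(n)(z-1)^n, \] where $T(n)=\sum_{k=1}^{n}\frac{(-1)^k}{2^{k/2}k}\sin\frac{3k\pi}{4}$ for $n\ge1$. *)

theory Defs
  imports "HOL-Analysis.Analysis"
begin

definition T :: "nat \<Rightarrow> real" where
  "T n = (\<Sum>k=1..n. (-1)^k / (2 powr (real k / 2) * real k) * sin (3 * real k * pi / 4))"

end

theory Submission
  imports Defs
begin

text \<open>Put \<open>u = 1 - z\<close> and \<open>\<omega> = (1 + \<i>) / 2 = exp (\<i> \<pi> / 4) / sqrt 2\<close>. Since
  \<open>1 + z\<^sup>2 = 2 (1 - cnj \<omega> u) (1 - \<omega> u)\<close>, partial fractions show that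
  \<open>Arctan z - \<pi> / 4\<close> and \<open>\<i> / 2 (Ln (1 - cnj \<omega> u) - Ln (1 - \<omega> u))\<close> have the same
  derivative on the disc \<open>|u| < 1\<close>; both vanish at \<open>z = 1\<close>, so they agree. Expanding the
  logarithms gives \<open>Arctan z - \<pi> / 4 = \<Sum>\<^sub>k t\<^sub>k u\<^sup>k\<close> with \<open>t\<^sub>k = - Im (\<omega>\<^sup>k) / k\<close>, the \<open>k\<close>-th
  summand of \<open>T\<close>. Dividing by \<open>z = 1 - u\<close> is a Cauchy product with the geometric series
  \<open>\<Sum>\<^sub>n u\<^sup>n\<close>, which turns the coefficients \<open>t\<^sub>k\<close> into their partial sums \<open>T n\<close>.\<close>

lemma sums_partial_sums_mult_power:
  fixes c :: "nat \<Rightarrow> 'a::{real_normed_field,banach}"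
  assumes x: "norm x < 1"
    and summable_norm: "summable (\<lambda>n. norm (c n * x ^ n))"
    and sums: "(\<lambda>n. c n * x ^ n) sums S"
  shows "(\<lambda>n. (\<Sum>k\<le>n. c k) * x ^ n) sums (S / (1 - x))"
proof -
  have geometric: "(\<lambda>n. x ^ n) sums (1 / (1 - x))"
    using geometric_sums[OF x] .
  have "summable (\<lambda>n. norm (x ^ n))"
    using x by (simp add: norm_power summable_geometric)
  from Cauchy_product_sums[OF summable_norm this]
  have "(\<lambda>n. \<Sum>k\<le>n. c k * x ^ k * x ^ (n - k)) sums (S * (1 / (1 - x)))"
    by (simp only: sums_unique[OF sums] sums_unique[OF geometric])
  moreover have "(\<Sum>k\<le>n. c k * x ^ k * x ^ (n - k)) = (\<Sum>k\<le>n. c k) * x ^ n" for n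
    by (simp add: sum_distrib_right mult.assoc flip: power_add)
  ultimately show ?thesis
    by simp
qed

text \<open>The summand for \<open>k = 0\<close> is \<open>0\<close> because of \<open>x / 0 = 0\<close>.\<close>

definition T_summand :: "nat \<Rightarrow> real" where
  "T_summand k = (-1)^k / (2 powr (real k / 2) * real k) * sin (3 * real k * pi / 4)"

lemma T_eq_sum_atMost: "T n = (\<Sum>k\<le>n. T_summand k)"
  by (simp add: T_def T_summand_def atMost_atLeast0 sum.atLeast_Suc_atMost)

definition \<omega> :: complex where
  "\<omega> = (1 + \<i>) / 2"

lemma \<omega>_eq_rcis: "\<omega> = rcis (1 / sqrt 2) (pi / 4)"
  by (simp add: \<omega>_def rcis_def cis.ctr cos_45 sin_45 complex_eq_iff field_simps)

lemma norm_\<omega>_le_1: "norm \<omega> \<le> 1"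
  by (simp add: \<omega>_eq_rcis)

lemma T_summand_eq_Im_\<omega>_power: "T_summand n = - Im (\<omega> ^ n) / n"
proof -
  have "sin (3 * real n * pi / 4) = sin (real n * pi - real n * pi / 4)"
    by (simp add: field_simps)
  also have "\<dots> = - ((-1) ^ n * sin (real n * pi / 4))"
    by (simp only: sin_diff sin_npi cos_npi)
  finally have "sin (3 * real n * pi / 4) = - ((-1) ^ n * sin (real n * pi / 4))" .
  moreover have "2 powr (real n / 2) = sqrt 2 ^ n"
    by (simp add: powr_half_sqrt[symmetric] powr_realpow[symmetric] powr_powr)
  ultimately show ?thesis
    by (simp add: T_summand_def \<omega>_eq_rcis DeMoivre2 power_divide field_simps flip: power_mult_distrib)
qed

lemma abs_T_summand_le_1: "\<bar>T_summand n\<bar> \<le> 1"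
proof -
  have "\<bar>Im (\<omega> ^ n)\<bar> \<le> 1"
    using abs_Im_le_cmod[of "\<omega> ^ n"] power_le_one[OF norm_ge_zero norm_\<omega>_le_1, of n]
    by (simp add: norm_power)
  then show ?thesis
    by (cases "n = 0") (auto simp: T_summand_eq_Im_\<omega>_power divide_le_eq intro: order_trans)
qed

lemma summable_norm_T_summand_mult_power:
  assumes "norm u < 1"
  shows "summable (\<lambda>n. norm (complex_of_real (T_summand n) * u ^ n))"
proof (rule summable_comparison_test')
  show "summable (\<lambda>n. norm u ^ n)"
    using assms by (simp add: summable_geometric)
  show "norm (norm (complex_of_real (T_summand n) * u ^ n)) \<le> norm u ^ n" for n
    using mult_right_mono[OF abs_T_summand_le_1, of "norm u ^ n"]
    by (simp add: norm_mult norm_power)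
qed

lemma one_minus_notin_nonpos_Reals:
  fixes u :: complex
  assumes "norm u < 1"
  shows "1 - u \<notin> \<real>\<^sub>\<le>\<^sub>0"
proof -
  have "Re u < 1"
    using abs_Re_le_cmod[of u] assms by linarith
  then show ?thesis
    by (simp add: complex_nonpos_Reals_iff)
qed

lemma norm_\<omega>_mult_less_1:
  assumes "norm u < 1"
  shows "norm (\<omega> * u) < 1" "norm (cnj \<omega> * u) < 1"
  using assms mult_left_le_one_le[OF norm_ge_zero norm_ge_zero norm_\<omega>_le_1, of u]
  by (simp_all add: norm_mult)

lemma has_field_derivative_Ln_affine:
  assumes "1 - c * (1 - z) \<notin> \<real>\<^sub>\<le>\<^sub>0"
  shows "((\<lambda>w. Ln (1 - c * (1 - w))) has_field_derivative c / (1 - c * (1 - z))) (at z)"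
proof -
  have "((\<lambda>w. Ln (1 - c * (1 - w))) has_field_derivative inverse (1 - c * (1 - z)) * c) (at z)"
    by (rule DERIV_chain2[of Ln _ "\<lambda>w. 1 - c * (1 - w)", OF has_field_derivative_Ln[OF assms]])
      (auto intro!: derivative_eq_intros)
  then show ?thesis
    by (simp add: divide_inverse_commute)
qed

lemma inverse_1_plus_square_partial_fractions:
  fixes z :: complex
  assumes "1 - cnj \<omega> * (1 - z) \<noteq> 0" and "1 - \<omega> * (1 - z) \<noteq> 0"
  shows "\<i> / 2 * (cnj \<omega> / (1 - cnj \<omega> * (1 - z)) - \<omega> / (1 - \<omega> * (1 - z))) = inverse (1 + z\<^sup>2)"
proof -
  have product: "(1 - cnj \<omega> * (1 - z)) * (1 - \<omega> * (1 - z)) = (1 + z\<^sup>2) / 2"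
    and numerator: "cnj \<omega> * (1 - \<omega> * (1 - z)) - \<omega> * (1 - cnj \<omega> * (1 - z)) = - \<i>"
    by (auto simp: \<omega>_def complex_eq_iff power2_eq_square field_simps)
  have "cnj \<omega> / (1 - cnj \<omega> * (1 - z)) - \<omega> / (1 - \<omega> * (1 - z))
      = (cnj \<omega> * (1 - \<omega> * (1 - z)) - \<omega> * (1 - cnj \<omega> * (1 - z)))
        / ((1 - cnj \<omega> * (1 - z)) * (1 - \<omega> * (1 - z)))"
    using assms by (simp add: field_simps)
  also have "\<dots> = - \<i> / ((1 + z\<^sup>2) / 2)"
    by (simp only: product numerator)
  finally show ?thesis
    by (simp only:) (simp add: field_split_simps)
qed

lemma Arctan_minus_pi_div_4_eq_Ln:
  assumes "norm (z - 1) < 1"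
  shows "Arctan z - complex_of_real pi / 4
    = \<i> / 2 * (Ln (1 - cnj \<omega> * (1 - z)) - Ln (1 - \<omega> * (1 - z)))"
proof -
  define F where
    "F w = Arctan w - \<i> / 2 * (Ln (1 - cnj \<omega> * (1 - w)) - Ln (1 - \<omega> * (1 - w)))" for w
  have "(F has_field_derivative 0) (at w within ball 1 1)" if "w \<in> ball 1 1" for w
  proof -
    have u: "norm (1 - w) < 1"
      using that by (simp add: dist_norm)
    have A: "1 - cnj \<omega> * (1 - w) \<notin> \<real>\<^sub>\<le>\<^sub>0" and B: "1 - \<omega> * (1 - w) \<notin> \<real>\<^sub>\<le>\<^sub>0"
      by (intro one_minus_notin_nonpos_Reals norm_\<omega>_mult_less_1 u)+
    have "Re w > 0"
      using abs_Re_le_cmod[of "1 - w"] u by simp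
    then have "(Arctan has_field_derivative inverse (1 + w\<^sup>2)) (at w)"
      by (intro has_field_derivative_Arctan) simp
    then have "(F has_field_derivative inverse (1 + w\<^sup>2)
        - \<i> / 2 * (cnj \<omega> / (1 - cnj \<omega> * (1 - w)) - \<omega> / (1 - \<omega> * (1 - w)))) (at w)"
      unfolding F_def by (intro DERIV_diff DERIV_cmult has_field_derivative_Ln_affine A B)
    moreover have "\<i> / 2 * (cnj \<omega> / (1 - cnj \<omega> * (1 - w)) - \<omega> / (1 - \<omega> * (1 - w)))
        = inverse (1 + w\<^sup>2)"
      using A B by (intro inverse_1_plus_square_partial_fractions) auto
    ultimately show ?thesis
      by (simp add: has_field_derivative_at_within)
  qed
  then obtain c where "\<forall>w\<in>ball 1 1. F w = c"
    using has_field_derivative_zero_constant[of "ball 1 1" F] by auto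
  moreover have "F 1 = complex_of_real pi / 4"
    using Arctan_of_real[of 1] by (simp add: F_def arctan_one)
  ultimately have "F z = complex_of_real pi / 4"
    using assms by (simp add: dist_norm norm_minus_commute)
  then show ?thesis
    unfolding F_def diff_eq_eq by (simp only: add.commute)
qed

lemma Arctan_minus_pi_div_4_sums:
  assumes "norm (z - 1) < 1"
  shows "(\<lambda>n. complex_of_real (T_summand n) * (1 - z) ^ n) sums (Arctan z - complex_of_real pi / 4)"
proof -
  have u: "norm (1 - z) < 1"
    using assms by (simp add: norm_minus_commute)
  have Ln_sums: "(\<lambda>n. - ((c * (1 - z)) ^ n) / of_nat n) sums Ln (1 - c * (1 - z))"
    if "norm (c * (1 - z)) < 1" for c
    using Ln_series'[of "- c * (1 - z)"] that by simp
  have "(\<lambda>n. \<i> / 2 * (- ((cnj \<omega> * (1 - z)) ^ n) / of_nat n - - ((\<omega> * (1 - z)) ^ n) / of_nat n))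
      sums (Arctan z - complex_of_real pi / 4)"
    unfolding Arctan_minus_pi_div_4_eq_Ln[OF assms]
    by (intro sums_mult sums_diff Ln_sums norm_\<omega>_mult_less_1 u)
  moreover have "\<i> / 2 * (- ((cnj \<omega> * (1 - z)) ^ n) / of_nat n - - ((\<omega> * (1 - z)) ^ n) / of_nat n)
      = complex_of_real (T_summand n) * (1 - z) ^ n" for n
  proof -
    have "\<i> / 2 * (- ((cnj \<omega> * (1 - z)) ^ n) / of_nat n - - ((\<omega> * (1 - z)) ^ n) / of_nat n)
        = \<i> / 2 * (\<omega> ^ n - cnj (\<omega> ^ n)) / of_nat n * (1 - z) ^ n"
      by (simp only: power_mult_distrib complex_cnj_power) (simp add: algebra_simps diff_divide_distrib)
    also have "\<dots> = complex_of_real (T_summand n) * (1 - z) ^ n"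
      by (subst complex_diff_cnj) (simp add: T_summand_eq_Im_\<omega>_power algebra_simps)
    finally show ?thesis .
  qed
  ultimately show ?thesis
    by simp
qed

theorem corollary3p1:
  fixes z :: complex
  assumes "cmod (z - 1) < 1"
  shows "(\<lambda>n. (-1) ^ (n + 1) * complex_of_real (T (n + 1)) * (z - 1) ^ (n + 1))
           sums ((Arctan z - complex_of_real pi / 4) / z)"
proof -
  have u: "norm (1 - z) < 1"
    using assms by (simp add: norm_minus_commute)
  from sums_partial_sums_mult_power[OF u summable_norm_T_summand_mult_power[OF u]
      Arctan_minus_pi_div_4_sums[OF assms]]
  have "(\<lambda>n. complex_of_real (T n) * (1 - z) ^ n) sums ((Arctan z - complex_of_real pi / 4) / z)"
    by (simp add: T_eq_sum_atMost)
  then have "(\<lambda>n. complex_of_real (T (Suc n)) * (1 - z) ^ Suc n) sums ((Arctan z - complex_of_real pi / 4) / z)"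
    by (subst sums_Suc_iff) (simp add: T_def)
  moreover have "(\<lambda>n. (-1) ^ (n + 1) * complex_of_real (T (n + 1)) * (z - 1) ^ (n + 1))
      = (\<lambda>n. complex_of_real (T (Suc n)) * (1 - z) ^ Suc n)"
  proof -
    have sign: "(-1) ^ m * (z - 1) ^ m = (1 - z) ^ m" for m :: nat
      by (simp only: power_mult_distrib[symmetric] mult_minus1 minus_diff_eq)
    show ?thesis
      by (simp only: Suc_eq_plus1 mult_ac flip: sign)
  qed
  ultimately show ?thesis
    by (simp only:)
qed

end
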